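(* Let $G$ be a well-shaped mesh in $d$ dimensions and $G_p\subseteq G$ an induced subgraph. The output $G_{px},G_{py}$ of RelaxBalancedPartition$(G_p)$ is a relax-balanced $f$-partition of $G_p$ with $f(N)=O(N^{1-1/d})$; that is, $|E(G_{px},G_{py})|\le f(|G_p|)$, $|G_{px}|=|G_{py}|\pm O(|G_p|/\log^3|G|)$, and $|\mathrm{outgoing}(G_{px})|=|\mathrm{outgoing}(G_{py})|\pm O(|\mathrm{outgoing}(G_{py})|/\log^2|G|)$.
   Context: A well-shaped mesh in $d$ dimensions ($d>1$ constant) is the graph of a decomposition of a domain in $\mathbb{R}^d$ into interior-disjoint simplices meeting only in lower-dimensional simplices, each with aspect ratio bounded by a fixed constant; it has bounded degree. For a graph $H$, $|H|$ denotes its size (number of vertices plus edges). Asymptotic constants may depend on $d$ and the mesh-quality constants. $\mathrm{outer}(G_p)$ is the set of edges from vertices of $G_p$ to vertices of $G$ outside $G_p$; for a partition of $G_p$ into $G_{px},G_{py}$, $\mathrm{outgoing}(G_{px})=E(G_{px},G-G_p)$ and similarly for $G_{py}$. Geometric separator step: the randomized algorithm of Miller, Teng, Thurston and Vavasis, applied to an induced subgraph $H$ with vertex set $V_H$, repeatedly draws a random sphere separator and accepts once the resulting partition has both parts of size at most $\beta|V_H|$, $\beta=(d+1+\epsilon)/(d+2)$ (fixed $0<\epsilon<1$), and $O(|V_H|^{1-1/d})$ crossing edges. A decomposition tree of $H$ is obtained by applying this separator recursively until parts are single vertices. Relax partition tree of $G_p$: the upper tree consists of the top $3\log_{1/\beta}\log|G|$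 levels of a decomposition tree of $G_p$; each upper-tree leaf incident to more than $|\mathrm{outer}(G_p)|/\log^2|G|$ edges of $\mathrm{outer}(G_p)$ is refined by building a full decomposition tree on it; other upper-tree leaves are left unrefined with their vertices in arbitrary order. RelaxBalancedPartition$(G_p)$: (1) build a relax partition tree of $G_p$; (2) list vertices in left-to-right leaf order, form the red-blue array (a blue element per vertex $v$ followed by $|E(v,G-G_p)|$ red elements) and find a contiguous subarray containing half the blue and half the red elements to within one; (3) move each end of the subarray that falls strictly inside the block of an unrefined leaf left or right to a boundary of that leaf; let $V_{px}$ be vertices whose blue elements lie in the modified subarray and $V_{py}$ the rest; (4) let $G_{px},G_{py}$ be the induced subgraphs.
   Formalization: The balance $|G_{px}|=|G_{py}|\pm O(|G_p|/\log^3|G|)$ compares the numbers of vertices of $G_{px}$ and $G_{py}$, not vertices plus edges, and both balance bounds also allow an additive constant. The statement above fails without it. *)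

theory Defs
  imports "HOL-Analysis.Analysis"
begin

definition is_simplex :: "(real ^ 'd) set \<Rightarrow> bool" where
  "is_simplex s \<longleftrightarrow> finite s \<and> card s = CARD('d) + 1 \<and> \<not> affine_dependent s"

definition inradius :: "(real ^ 'd) set \<Rightarrow> real" where
  "inradius s = Sup {r. \<exists>x. ball x r \<subseteq> convex hull s}"

definition aspect_ratio :: "(real ^ 'd) set \<Rightarrow> real" where
  "aspect_ratio s = diameter s / inradius s"

definition well_shaped_mesh :: "real \<Rightarrow> (real ^ 'd) set set \<Rightarrow> bool" where
  "well_shaped_mesh rho S \<longleftrightarrow>
     finite S \<and>
     (\<forall>s\<in>S. is_simplex s \<and> aspect_ratio s \<le> rho) \<and>
     (\<forall>s\<in>S. \<forall>t\<in>S. s \<noteq> t \<longrightarrow>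
         interior (convex hull s) \<inter> interior (convex hull t) = {} \<and>
         convex hull s \<inter> convex hull t = convex hull (s \<inter> t))"

definition mesh_vertices :: "(real ^ 'd) set set \<Rightarrow> (real ^ 'd) set" where
  "mesh_vertices S = \<Union>S"

definition mesh_edge :: "(real ^ 'd) set set \<Rightarrow> real ^ 'd \<Rightarrow> real ^ 'd \<Rightarrow> bool" where
  "mesh_edge S u v \<longleftrightarrow> u \<noteq> v \<and> (\<exists>s\<in>S. u \<in> s \<and> v \<in> s)"

definition gsize :: "'a set \<Rightarrow> ('a \<Rightarrow> 'a \<Rightarrow> bool) \<Rightarrow> nat" where
  "gsize A E = card A + card {{u, v} | u v. u \<in> A \<and> v \<in> A \<and> E u v}"

text \<open>Number of edges between A and B (disjoint vertex sets), each undirected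
edge counted once via its orientation from A to B.\<close>
definition ecount :: "('a \<Rightarrow> 'a \<Rightarrow> bool) \<Rightarrow> 'a set \<Rightarrow> 'a set \<Rightarrow> nat" where
  "ecount E A B = card {(u, v). u \<in> A \<and> v \<in> B \<and> E u v}"

text \<open>outgoing(A) = E(A, G - G_p) for A inside G_p (vertex set P);
outer(G_p) = outgoing(P).\<close>
definition outgoing :: "'a set \<Rightarrow> ('a \<Rightarrow> 'a \<Rightarrow> bool) \<Rightarrow> 'a set \<Rightarrow> 'a set \<Rightarrow> nat" where
  "outgoing V E P A = ecount E A (V - P)"

text \<open>Leaf v: single-vertex leaf of a (full) decomposition tree;
Unref xs: unrefined upper-tree leaf with its vertices in the (arbitrary) order xs;
Node l r: a separator split into left and right part.\<close>
datatype 'a rtree = Leaf 'a | Unref "'a list" | Node "'a rtree" "'a rtree"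

fun vlist :: "'a rtree \<Rightarrow> 'a list" where
  "vlist (Leaf v) = [v]"
| "vlist (Unref xs) = xs"
| "vlist (Node l r) = vlist l @ vlist r"

text \<open>Acceptance condition of the geometric separator step on the vertex set
A \<union> B split into A, B: both parts at most beta |V_H|, at most
c |V_H|^(1-1/d) crossing edges.\<close>
definition split_ok :: "('a \<Rightarrow> 'a \<Rightarrow> bool) \<Rightarrow> real \<Rightarrow> real \<Rightarrow> real \<Rightarrow> 'a set \<Rightarrow> 'a set \<Rightarrow> bool" where
  "split_ok E beta c d A B \<longleftrightarrow>
     A \<noteq> {} \<and> B \<noteq> {} \<and> A \<inter> B = {} \<and>
     real (card A) \<le> beta * real (card (A \<union> B)) \<and>
     real (card B) \<le> beta * real (card (A \<union> B)) \<and>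
     real (ecount E A B) \<le> c * real (card (A \<union> B)) powr (1 - 1 / d)"

fun full_dtree :: "('a set \<Rightarrow> 'a set \<Rightarrow> bool) \<Rightarrow> 'a rtree \<Rightarrow> bool" where
  "full_dtree sp (Leaf v) = True"
| "full_dtree sp (Unref xs) = False"
| "full_dtree sp (Node l r) =
     (sp (set (vlist l)) (set (vlist r)) \<and> full_dtree sp l \<and> full_dtree sp r)"

text \<open>upper_ok sp hv k t: t is a relax partition (sub)tree whose upper tree has
k remaining levels; hv H says that upper-tree leaf H is heavy (must be refined).\<close>
fun upper_ok :: "('a set \<Rightarrow> 'a set \<Rightarrow> bool) \<Rightarrow> ('a set \<Rightarrow> bool) \<Rightarrow> nat \<Rightarrow> 'a rtree \<Rightarrow> bool" where
  "upper_ok sp hv k (Leaf v) = hv {v}"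
| "upper_ok sp hv k (Unref xs) = (distinct xs \<and> \<not> hv (set xs) \<and> (k = 0 \<or> length xs = 1))"
| "upper_ok sp hv k (Node l r) =
     ((k > 0 \<and> sp (set (vlist l)) (set (vlist r)) \<and> upper_ok sp hv (k - 1) l \<and> upper_ok sp hv (k - 1) r)
      \<or> (k = 0 \<and> hv (set (vlist (Node l r))) \<and> full_dtree sp (Node l r)))"

definition upper_depth :: "real \<Rightarrow> nat \<Rightarrow> nat" where
  "upper_depth beta sizeG = nat \<lceil>3 * log (1 / beta) (log 2 (real sizeG))\<rceil>"

definition heavy :: "'a set \<Rightarrow> ('a \<Rightarrow> 'a \<Rightarrow> bool) \<Rightarrow> 'a set \<Rightarrow> 'a set \<Rightarrow> bool" where
  "heavy V E P H \<longleftrightarrow>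
     real (outgoing V E P H) > real (outgoing V E P P) / (log 2 (real (gsize V E))) ^ 2"

definition relax_tree :: "'a set \<Rightarrow> ('a \<Rightarrow> 'a \<Rightarrow> bool) \<Rightarrow> real \<Rightarrow> real \<Rightarrow> real \<Rightarrow> 'a set \<Rightarrow> 'a rtree \<Rightarrow> bool" where
  "relax_tree V E beta c d P t \<longleftrightarrow>
     upper_ok (split_ok E beta c d) (heavy V E P) (upper_depth beta (gsize V E)) t \<and>
     distinct (vlist t) \<and> set (vlist t) = P"

text \<open>Segments of the leaf order; the flag marks unrefined leaves.\<close>
fun segs :: "'a rtree \<Rightarrow> ('a list \<times> bool) list" where
  "segs (Leaf v) = [([v], False)]"
| "segs (Unref xs) = [(xs, True)]"
| "segs (Node l r) = segs l @ segs r"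

text \<open>Each vertex v occupies a block of 1 + |E(v, G - G_p)| array cells: its blue
element followed by its red elements.  wsum gives the total length of the blocks
of a vertex list; array positions are 0-based and a subarray is [i, j).\<close>
definition wsum :: "'a set \<Rightarrow> ('a \<Rightarrow> 'a \<Rightarrow> bool) \<Rightarrow> 'a set \<Rightarrow> 'a list \<Rightarrow> nat" where
  "wsum V E P xs = sum_list (map (\<lambda>v. 1 + outgoing V E P {v}) xs)"

definition bluepos :: "'a set \<Rightarrow> ('a \<Rightarrow> 'a \<Rightarrow> bool) \<Rightarrow> 'a set \<Rightarrow> 'a list \<Rightarrow> nat \<Rightarrow> nat" where
  "bluepos V E P vs n = wsum V E P (take n vs)"

definition blue_in :: "'a set \<Rightarrow> ('a \<Rightarrow> 'a \<Rightarrow> bool) \<Rightarrow> 'a set \<Rightarrow> 'a list \<Rightarrow> nat \<Rightarrow> nat \<Rightarrow> nat" where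
  "blue_in V E P vs i j = card {n. n < length vs \<and> i \<le> bluepos V E P vs n \<and> bluepos V E P vs n < j}"

definition seg_start :: "'a set \<Rightarrow> ('a \<Rightarrow> 'a \<Rightarrow> bool) \<Rightarrow> 'a set \<Rightarrow> ('a list \<times> bool) list \<Rightarrow> nat \<Rightarrow> nat" where
  "seg_start V E P sg m = wsum V E P (concat (map fst (take m sg)))"

definition seg_end :: "'a set \<Rightarrow> ('a \<Rightarrow> 'a \<Rightarrow> bool) \<Rightarrow> 'a set \<Rightarrow> ('a list \<times> bool) list \<Rightarrow> nat \<Rightarrow> nat" where
  "seg_end V E P sg m = seg_start V E P sg m + wsum V E P (fst (sg ! m))"

text \<open>Step (3): an end e strictly inside the block of an unrefined leaf is moved to
one of the two boundaries of that block; otherwise it stays.\<close>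
definition moved_end :: "'a set \<Rightarrow> ('a \<Rightarrow> 'a \<Rightarrow> bool) \<Rightarrow> 'a set \<Rightarrow> ('a list \<times> bool) list \<Rightarrow> nat \<Rightarrow> nat \<Rightarrow> bool" where
  "moved_end V E P sg e e' \<longleftrightarrow>
     (if \<exists>m < length sg. snd (sg ! m) \<and> seg_start V E P sg m < e \<and> e < seg_end V E P sg m
      then (\<exists>m < length sg. snd (sg ! m) \<and> seg_start V E P sg m < e \<and> e < seg_end V E P sg m \<and>
                (e' = seg_start V E P sg m \<or> e' = seg_end V E P sg m))
      else e' = e)"

text \<open>Px is a possible vertex set V_px output by RelaxBalancedPartition(G_p), where
G_p is induced by P in the graph (V, E), for separator parameters beta, c, d.\<close>
definition rbp_output :: "'a set \<Rightarrow> ('a \<Rightarrow> 'a \<Rightarrow> bool) \<Rightarrow> real \<Rightarrow> real \<Rightarrow> real \<Rightarrow> 'a set \<Rightarrow> 'a set \<Rightarrow> bool" where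
  "rbp_output V E beta c d P Px \<longleftrightarrow>
     (\<exists>t i j i' j'.
        relax_tree V E beta c d P t \<and>
        (let vs = vlist t; sg = segs t; B = length vs; R = outgoing V E P P;
             b = blue_in V E P vs i j; r = (j - i) - b in
          i \<le> j \<and> j \<le> wsum V E P vs \<and>
          \<bar>2 * real b - real B\<bar> \<le> 2 \<and> \<bar>2 * real r - real R\<bar> \<le> 2 \<and>
          moved_end V E P sg i i' \<and> moved_end V E P sg j j' \<and>
          Px = {vs ! n | n. n < length vs \<and> i' \<le> bluepos V E P vs n \<and> bluepos V E P vs n < j'}))"

end

(*
  The degree of a well-shaped mesh is bounded: the simplices at a vertex v contain pairwise
  disjoint balls of radius proportional to the smallest of their diameters, all within a ball
  around v of comparable radius, so a volume comparison bounds their number.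

  In the separator tree every split cuts O(n^(1-1/d)) edges and shrinks the parts by the factor
  beta, so a cut of the leaf order that does not split an unrefined leaf crosses at most
  K n^(1-1/d) edges, K = c / (1 - beta^(1-1/d)). The output V_px is the slice between two such
  cuts.

  The balanced subarray has half of the blue and half of the red elements. Moving one of its
  ends to a boundary of an unrefined leaf changes the blue count by at most the size of that
  leaf, which is O(|G_p| / log^3 |G|) since it lies 3 log_(1/beta) log |G| levels deep, and the
  red count by at most its number of outer edges, which is at most |outer(G_p)| / log^2 |G|
  since it is not heavy. Finally |outer(G_p)| = |outgoing(G_px)| + |outgoing(G_py)|, and the
  error term in |outer(G_p)| is absorbed into the left-hand side.
*)

theory Submission
  imports Defs
begin

section \<open>The vertex degree of a well-shaped mesh\<close>

lemma convex_hull_subset_cball_diameter: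
  fixes s :: "'a :: euclidean_space set"
  assumes "finite s" "v \<in> s"
  shows "convex hull s \<subseteq> cball v (diameter s)"
proof (rule hull_minimal)
  show "s \<subseteq> cball v (diameter s)"
    using diameter_bounded_bound[OF finite_imp_bounded[OF assms(1)] assms(2)]
    by (auto simp: dist_commute)
qed (rule convex_cball)

lemma simplex_inscribed_ball:
  fixes s :: "(real ^ 'd) set"
  assumes "is_simplex s" "aspect_ratio s \<le> rho"
  shows "\<exists>x r. 0 < r \<and> ball x r \<subseteq> convex hull s \<and> 0 < diameter s \<and> diameter s \<le> 2 * rho * r"
proof -
  have fin: "finite s" and card: "card s = CARD('d) + 1" and "\<not> affine_dependent s"
    using assms(1) unfolding is_simplex_def by auto
  then have "interior (convex hull s) \<noteq> {}"
    using interior_convex_hull_eq_empty[of s] by simp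
  then obtain x0 where "x0 \<in> interior (convex hull s)" by blast
  then obtain e where e: "0 < e" "ball x0 e \<subseteq> convex hull s"
    unfolding mem_interior by blast
  obtain v where "v \<in> s" using card by fastforce
  have D0: "0 \<le> diameter s" using diameter_ge_0[OF finite_imp_bounded[OF fin]] .
  have r_le_diam: "r \<le> diameter s" if "ball x r \<subseteq> convex hull s" for x r
  proof (cases "0 < r")
    case True
    have "diameter (ball x r) \<le> diameter (cball v (diameter s))"
      using subset_trans[OF that convex_hull_subset_cball_diameter[OF fin \<open>v \<in> s\<close>]]
      by (intro diameter_subset) auto
    then show ?thesis using True D0 by simp
  qed (use D0 in simp)
  define Q where "Q = {r. \<exists>x. ball x r \<subseteq> convex hull s}"
  have "bdd_above Q" unfolding Q_def using r_le_diam by (intro bdd_aboveI) blast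
  moreover have "e \<in> Q" using e unfolding Q_def by auto
  ultimately have e_le: "e \<le> inradius s"
    unfolding inradius_def Q_def[symmetric] by (rule cSup_upper[rotated])
  then have "inradius s / 2 < Sup Q" using e(1) unfolding inradius_def Q_def by simp
  then obtain r where "r \<in> Q" and r: "inradius s / 2 < r"
    using less_cSupE[of "inradius s / 2" Q] \<open>e \<in> Q\<close> by blast
  then obtain x where x: "ball x r \<subseteq> convex hull s" unfolding Q_def by auto
  have "0 < r" using r e_le e(1) by simp
  have "0 < diameter s" using r_le_diam[OF x] \<open>0 < r\<close> by simp
  have "diameter s \<le> rho * inradius s"
    using assms(2) e_le e(1) unfolding aspect_ratio_def by (simp add: divide_le_eq)
  moreover have "0 < diameter s / inradius s" using \<open>0 < diameter s\<close> e_le e(1) by simp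
  then have "0 \<le> rho" using assms(2) unfolding aspect_ratio_def by linarith
  moreover have "inradius s \<le> 2 * r" using r by simp
  ultimately have "diameter s \<le> rho * (2 * r)"
    using mult_left_mono[of "inradius s" "2 * r" rho] by linarith
  then have "diameter s \<le> 2 * rho * r" by (simp add: algebra_simps)
  with x \<open>0 < r\<close> \<open>0 < diameter s\<close> show ?thesis by blast
qed

lemma ball_shrunk_towards_point_subset:
  fixes v x :: "'a :: real_normed_vector"
  assumes "convex C" "v \<in> C" "ball x r \<subseteq> C" "0 < lam" "lam \<le> 1"
  shows "ball (v + lam *\<^sub>R (x - v)) (lam * r) \<subseteq> C"
proof
  fix y assume y: "y \<in> ball (v + lam *\<^sub>R (x - v)) (lam * r)"
  define z where "z = v + (1 / lam) *\<^sub>R (y - v)"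
  have "x - z = (1 / lam) *\<^sub>R ((v + lam *\<^sub>R (x - v)) - y)"
    unfolding z_def using assms(4) by (simp add: algebra_simps)
  then have "dist x z = dist (v + lam *\<^sub>R (x - v)) y / lam"
    using assms(4) by (simp add: dist_norm)
  also have "\<dots> < r" using y assms(4) by (simp add: divide_simps mult.commute)
  finally have "z \<in> C" using assms(3) by auto
  then have "(1 - lam) *\<^sub>R v + lam *\<^sub>R z \<in> C"
    using convexD_alt[OF assms(1,2)] assms(4,5) by simp
  moreover have "(1 - lam) *\<^sub>R v + lam *\<^sub>R z = y"
    unfolding z_def using assms(4) by (simp add: algebra_simps)
  ultimately show "y \<in> C" by simp
qed

lemma card_le_of_disjoint_balls_in_ball:
  fixes c :: "'i \<Rightarrow> 'a :: euclidean_space"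
  assumes "finite T" "disjoint_family_on (\<lambda>s. ball (c s) q) T"
    and "\<And>s. s \<in> T \<Longrightarrow> ball (c s) q \<subseteq> ball v R" and "0 < q" "0 \<le> R"
  shows "real (card T) \<le> (R / q) ^ DIM('a)"
proof -
  define u where "u = measure lborel (ball (0 :: 'a) 1)"
  have "0 < u" unfolding u_def using content_ball_pos[of 1 "0 :: 'a"] by simp
  have "measure lborel (ball (c s) q) = q ^ DIM('a) * u" for s
    using content_ball_conv_unit_ball[of q "c s"] assms(4) unfolding u_def by simp
  then have "real (card T) * (q ^ DIM('a) * u) = (\<Sum>s\<in>T. measure lborel (ball (c s) q))"
    by simp
  also have "\<dots> = measure lborel (\<Union>s\<in>T. ball (c s) q)"
    using assms(1,2) emeasure_lborel_ball_finite
    by (intro measure_finite_Union[symmetric]) (auto simp: top.not_eq_extremum)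
  also have "\<dots> \<le> measure lborel (ball v R)"
    using assms(3) emeasure_lborel_ball_finite[of v R]
    by (intro measure_mono_fmeasurable) (auto simp: fmeasurable_def intro: borel_open)
  also have "\<dots> = R ^ DIM('a) * u"
    using content_ball_conv_unit_ball[of R v] assms(5) unfolding u_def by simp
  finally have "real (card T) * q ^ DIM('a) \<le> R ^ DIM('a)"
    using \<open>0 < u\<close> by (simp add: mult.assoc)
  moreover have "0 < q ^ DIM('a)" using assms(4) by simp
  ultimately show ?thesis
    unfolding power_divide by (simp add: pos_le_divide_eq)
qed

lemma shrunk_inscribed_ball:
  fixes s :: "'a :: euclidean_space set"
  assumes "finite s" "v \<in> s" "0 < r" "ball x r \<subseteq> convex hull s"
    and "0 < h" "h \<le> diameter s" "diameter s \<le> 2 * rho * r"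
  defines "c \<equiv> v + (h / diameter s) *\<^sub>R (x - v)"
  shows "ball c (h / (2 * rho)) \<subseteq> convex hull s"
    and "ball c (h / (2 * rho)) \<subseteq> ball v (h + h / (2 * rho))"
proof -
  have "0 < diameter s" using assms(5,6) by linarith
  then have "0 < rho" using assms(3,7) by (smt (verit) mult_nonpos_nonneg)
  have "h * diameter s \<le> h * (2 * rho * r)" using assms(5,7) by simp
  then have "h / (2 * rho) \<le> h / diameter s * r"
    using \<open>0 < rho\<close> \<open>0 < diameter s\<close> by (simp add: divide_simps algebra_simps)
  moreover have "ball c (h / diameter s * r) \<subseteq> convex hull s"
    unfolding c_def using assms \<open>0 < diameter s\<close>
    by (intro ball_shrunk_towards_point_subset) (auto simp: hull_inc)
  ultimately show "ball c (h / (2 * rho)) \<subseteq> convex hull s" by (meson subset_ball subset_trans)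
  have "x \<in> cball v (diameter s)"
    using convex_hull_subset_cball_diameter[OF assms(1,2)] assms(3,4) centre_in_ball[of x r] by blast
  then have "dist v c \<le> h"
    unfolding c_def using \<open>0 < diameter s\<close> assms(5)
    by (simp add: dist_norm norm_minus_commute divide_simps)
  show "ball c (h / (2 * rho)) \<subseteq> ball v (h + h / (2 * rho))"
  proof
    fix y assume "y \<in> ball c (h / (2 * rho))"
    then show "y \<in> ball v (h + h / (2 * rho))"
      using \<open>dist v c \<le> h\<close> dist_triangle[of v y c] by simp
  qed
qed

lemma card_simplices_at_vertex_le:
  fixes S :: "(real ^ 'd) set set"
  assumes mesh: "well_shaped_mesh rho S"
  shows "real (card {s\<in>S. v \<in> s}) \<le> (1 + 2 * \<bar>rho\<bar>) ^ CARD('d)"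
proof (cases "{s\<in>S. v \<in> s} = {}")
  case False
  define T where "T = {s\<in>S. v \<in> s}"
  have "finite T" using mesh unfolding well_shaped_mesh_def T_def by auto
  have simplex: "is_simplex s" "aspect_ratio s \<le> rho" "v \<in> s" "finite s" if "s \<in> T" for s
    using mesh that unfolding well_shaped_mesh_def T_def is_simplex_def by auto
  obtain x r where r: "\<And>s. s \<in> T \<Longrightarrow> 0 < r s \<and> ball (x s) (r s) \<subseteq> convex hull s \<and>
      0 < diameter s \<and> diameter s \<le> 2 * rho * r s"
    using simplex_inscribed_ball[OF simplex(1,2)] by metis
  then have r_pos: "0 < r s" and inscribed: "ball (x s) (r s) \<subseteq> convex hull s"
    and diam_pos: "0 < diameter s" and aspect: "diameter s \<le> 2 * rho * r s" if "s \<in> T" for s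
    using that by blast+
  obtain s0 where "s0 \<in> T" using False unfolding T_def by blast
  have "0 < rho" using r_pos aspect diam_pos \<open>s0 \<in> T\<close> by (smt (verit) mult_nonpos_nonneg)
  define h where "h = Min (diameter ` T)"
  have "0 < h" unfolding h_def using \<open>finite T\<close> \<open>s0 \<in> T\<close> diam_pos by (subst Min_gr_iff) auto
  have h_le: "h \<le> diameter s" if "s \<in> T" for s unfolding h_def using \<open>finite T\<close> that by simp
  define q where "q = h / (2 * rho)"
  define c where "c s = v + (h / diameter s) *\<^sub>R (x s - v)" for s
  note shrunk = shrunk_inscribed_ball[OF simplex(4,3) r_pos inscribed \<open>0 < h\<close> h_le aspect,
      folded q_def c_def]
  have "disjoint_family_on (\<lambda>s. ball (c s) q) T"
    unfolding disjoint_family_on_def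
  proof (intro ballI impI)
    fix s t assume "s \<in> T" "t \<in> T" "s \<noteq> t"
    then have "interior (convex hull s) \<inter> interior (convex hull t) = {}"
      using mesh unfolding well_shaped_mesh_def T_def by auto
    moreover have "ball (c s) q \<subseteq> interior (convex hull s)" "ball (c t) q \<subseteq> interior (convex hull t)"
      using shrunk(1) \<open>s \<in> T\<close> \<open>t \<in> T\<close> by (simp_all add: interior_maximal)
    ultimately show "ball (c s) q \<inter> ball (c t) q = {}" by blast
  qed
  then have "real (card T) \<le> ((h + q) / q) ^ DIM(real ^ 'd)"
    using \<open>finite T\<close> shrunk(2) \<open>0 < h\<close> \<open>0 < rho\<close> unfolding q_def
    by (intro card_le_of_disjoint_balls_in_ball) auto
  also have "(h + q) / q = 1 + 2 * \<bar>rho\<bar>"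
    unfolding q_def using \<open>0 < h\<close> \<open>0 < rho\<close> by (simp add: divide_simps algebra_simps)
  finally show ?thesis unfolding T_def by simp
next
  case True
  show ?thesis unfolding True by simp
qed

lemma mesh_vertices_finite: "well_shaped_mesh rho S \<Longrightarrow> finite (mesh_vertices S)"
  unfolding well_shaped_mesh_def is_simplex_def mesh_vertices_def by auto

lemma mesh_edge_commute: "mesh_edge S u v = mesh_edge S v u"
  unfolding mesh_edge_def by auto

lemma finite_edges_between:
  "finite A \<Longrightarrow> finite B \<Longrightarrow> finite {(u, v). u \<in> A \<and> v \<in> B \<and> E u v}"
  by (rule finite_subset[of _ "A \<times> B"]) auto

lemma ecount_mono:
  assumes "A \<subseteq> A'" "B \<subseteq> B'" "finite A'" "finite B'"
  shows "ecount E A B \<le> ecount E A' B'"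
  unfolding ecount_def using assms by (intro card_mono finite_edges_between) auto

lemma ecount_le_card_mult:
  assumes "finite A" "finite B"
  shows "ecount E A B \<le> card A * card B"
  unfolding ecount_def card_cartesian_product[symmetric] using assms by (intro card_mono) auto

lemma ecount_Un_left_le:
  assumes "finite A1" "finite A2" "finite B"
  shows "ecount E (A1 \<union> A2) B \<le> ecount E A1 B + ecount E A2 B"
proof -
  have "{(u, v). u \<in> A1 \<union> A2 \<and> v \<in> B \<and> E u v} =
        {(u, v). u \<in> A1 \<and> v \<in> B \<and> E u v} \<union> {(u, v). u \<in> A2 \<and> v \<in> B \<and> E u v}"
    (is "_ = ?X \<union> ?Y") by auto
  then show ?thesis unfolding ecount_def using card_Un_le[of ?X ?Y] by simp
qed

lemma ecount_Un_right_le: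
  assumes "finite A" "finite B1" "finite B2"
  shows "ecount E A (B1 \<union> B2) \<le> ecount E A B1 + ecount E A B2"
proof -
  have "{(u, v). u \<in> A \<and> v \<in> B1 \<union> B2 \<and> E u v} =
        {(u, v). u \<in> A \<and> v \<in> B1 \<and> E u v} \<union> {(u, v). u \<in> A \<and> v \<in> B2 \<and> E u v}"
    (is "_ = ?X \<union> ?Y") by auto
  then show ?thesis unfolding ecount_def using card_Un_le[of ?X ?Y] by simp
qed

lemma ecount_Un_left_disjoint:
  assumes "finite A1" "finite A2" "finite B" "A1 \<inter> A2 = {}"
  shows "ecount E (A1 \<union> A2) B = ecount E A1 B + ecount E A2 B"
proof -
  have "{(u, v). u \<in> A1 \<union> A2 \<and> v \<in> B \<and> E u v} =
        {(u, v). u \<in> A1 \<and> v \<in> B \<and> E u v} \<union> {(u, v). u \<in> A2 \<and> v \<in> B \<and> E u v}" by auto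
  moreover have "{(u, v). u \<in> A1 \<and> v \<in> B \<and> E u v} \<inter> {(u, v). u \<in> A2 \<and> v \<in> B \<and> E u v} = {}"
    using assms(4) by auto
  ultimately show ?thesis
    unfolding ecount_def using assms by (simp add: card_Un_disjoint finite_edges_between)
qed

lemma ecount_commute:
  assumes "\<And>u v. E u v = E v u"
  shows "ecount E A B = ecount E B A"
proof -
  have "{(u, v). u \<in> A \<and> v \<in> B \<and> E u v} = prod.swap ` {(u, v). u \<in> B \<and> v \<in> A \<and> E u v}"
  proof (rule set_eqI)
    fix p :: "'a \<times> 'a"
    obtain u v where p: "p = (u, v)" by (cases p)
    show "p \<in> {(u, v). u \<in> A \<and> v \<in> B \<and> E u v} \<longleftrightarrow> p \<in> prod.swap ` {(u, v). u \<in> B \<and> v \<in> A \<and> E u v}"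
      unfolding p image_iff using assms[of u v] by auto
  qed
  then show ?thesis unfolding ecount_def by (simp add: card_image)
qed

lemma outgoing_eq_sum_singletons:
  assumes "finite A" "finite V"
  shows "outgoing V E P A = (\<Sum>v\<in>A. outgoing V E P {v})"
  using assms(1)
proof (induction A rule: finite_induct)
  case (insert x F)
  then have "outgoing V E P ({x} \<union> F) = outgoing V E P {x} + outgoing V E P F"
    unfolding outgoing_def using assms(2) by (intro ecount_Un_left_disjoint) auto
  with insert show ?case by simp
qed (simp add: outgoing_def ecount_def)

lemma outgoing_singleton_le_mesh_degree:
  fixes S :: "(real ^ 'd) set set"
  assumes mesh: "well_shaped_mesh rho S"
  shows "outgoing (mesh_vertices S) (mesh_edge S) P {v}
           \<le> nat \<lceil>(1 + 2 * \<bar>rho\<bar>) ^ CARD('d)\<rceil> * (CARD('d) + 1)"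
proof -
  define T where "T = {s\<in>S. v \<in> s}"
  have "finite T" using mesh unfolding well_shaped_mesh_def T_def by auto
  have card_s: "card s = CARD('d) + 1" "finite s" if "s \<in> T" for s
    using mesh that unfolding well_shaped_mesh_def T_def is_simplex_def by auto
  have "outgoing (mesh_vertices S) (mesh_edge S) P {v} \<le> card ({v} \<times> \<Union>T)"
    unfolding outgoing_def ecount_def mesh_edge_def using \<open>finite T\<close> card_s
    by (intro card_mono) (auto simp: T_def)
  also have "\<dots> \<le> sum card T" using card_Union_le_sum_card[of T] by (simp add: card_cartesian_product)
  also have "\<dots> = card T * (CARD('d) + 1)" using card_s by simp
  also have "\<dots> \<le> nat \<lceil>(1 + 2 * \<bar>rho\<bar>) ^ CARD('d)\<rceil> * (CARD('d) + 1)"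
  proof (rule mult_le_mono1)
    have "real (card T) \<le> (1 + 2 * \<bar>rho\<bar>) ^ CARD('d)"
      unfolding T_def using mesh by (rule card_simplices_at_vertex_le)
    then show "card T \<le> nat \<lceil>(1 + 2 * \<bar>rho\<bar>) ^ CARD('d)\<rceil>"
      by (metis ceiling_mono ceiling_of_nat nat_int nat_mono)
  qed
  finally show ?thesis .
qed

section \<open>Cuts along the leaf order of a relax partition tree\<close>

fun splits_ok :: "('a set \<Rightarrow> 'a set \<Rightarrow> bool) \<Rightarrow> 'a rtree \<Rightarrow> bool" where
  "splits_ok sp (Leaf v) = True"
| "splits_ok sp (Unref xs) = True"
| "splits_ok sp (Node l r) = (sp (set (vlist l)) (set (vlist r)) \<and> splits_ok sp l \<and> splits_ok sp r)"

lemma full_dtree_splits_ok: "full_dtree sp t \<Longrightarrow> splits_ok sp t"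
  by (induction t) auto

lemma upper_ok_splits_ok: "upper_ok sp hv k t \<Longrightarrow> splits_ok sp t"
  by (induction t arbitrary: k) (auto simp: full_dtree_splits_ok)

lemma full_dtree_no_unrefined: "full_dtree sp t \<Longrightarrow> (xs, True) \<notin> set (segs t)"
  by (induction t) auto

lemma upper_ok_unrefined_light:
  "upper_ok sp hv k t \<Longrightarrow> (xs, True) \<in> set (segs t) \<Longrightarrow> \<not> hv (set xs)"
proof (induction t arbitrary: k)
  case (Node l r)
  then show ?case using full_dtree_no_unrefined[of sp "Node l r" xs] by (auto split: if_splits)
qed auto

lemma concat_map_fst_segs: "concat (map fst (segs t)) = vlist t"
  by (induction t) auto

lemma split_ok_lengths:
  assumes "split_ok E beta c d (set xs) (set ys)" "distinct (xs @ ys)"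
  shows "real (length xs) \<le> beta * real (length (xs @ ys))"
    and "real (length ys) \<le> beta * real (length (xs @ ys))"
    and "real (ecount E (set xs) (set ys)) \<le> c * real (length (xs @ ys)) powr (1 - 1 / d)"
proof -
  have "card (set xs \<union> set ys) = length (xs @ ys)"
    using assms(2) by (metis distinct_card set_append)
  then show "real (length xs) \<le> beta * real (length (xs @ ys))"
    and "real (length ys) \<le> beta * real (length (xs @ ys))"
    and "real (ecount E (set xs) (set ys)) \<le> c * real (length (xs @ ys)) powr (1 - 1 / d)"
    using assms unfolding split_ok_def by (auto simp: distinct_card)
qed

text \<open>An unrefined leaf sits at depth k of the upper tree and each accepted split shrinks the
  part by the factor beta.\<close>
lemma upper_ok_unrefined_length:
  assumes "upper_ok (split_ok E beta c d) hv k t" "distinct (vlist t)" "0 < beta"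
    "(xs, True) \<in> set (segs t)" "length xs \<noteq> 1"
  shows "real (length xs) * (1 / beta) ^ k \<le> real (length (vlist t))"
  using assms
proof (induction t arbitrary: k)
  case (Node l r)
  show ?case
  proof (cases "full_dtree (split_ok E beta c d) (Node l r)")
    case True
    then show ?thesis using full_dtree_no_unrefined Node.prems(4) by blast
  next
    case False
    then have "0 < k" and split: "split_ok E beta c d (set (vlist l)) (set (vlist r))"
      and "upper_ok (split_ok E beta c d) hv (k - 1) l" "upper_ok (split_ok E beta c d) hv (k - 1) r"
      using Node.prems(1) by auto
    then have "real (length xs) * (1 / beta) ^ (k - 1) \<le> real (length (vlist l))
          \<or> real (length xs) * (1 / beta) ^ (k - 1) \<le> real (length (vlist r))"
      using Node.IH Node.prems(2-5) by auto
    then have "real (length xs) * (1 / beta) ^ (k - 1) \<le> beta * real (length (vlist (Node l r)))"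
      using split_ok_lengths(1,2)[OF split] Node.prems(2) by fastforce
    moreover have "(1 / beta) ^ k = (1 / beta) * (1 / beta) ^ (k - 1)"
      using \<open>0 < k\<close> by (metis Suc_diff_1 power_Suc)
    ultimately show ?thesis using \<open>0 < beta\<close> by (simp add: field_simps)
  qed
qed auto

definition cut_const :: "real \<Rightarrow> real \<Rightarrow> real \<Rightarrow> real" where
  "cut_const beta c d = max c 0 / (1 - beta powr (1 - 1 / d))"

lemma cut_const_nonneg:
  assumes "0 < beta" "beta < 1" "0 < 1 - 1 / d"
  shows "0 \<le> cut_const beta c d"
  using powr01_less_one[of beta "1 - 1 / d"] assms unfolding cut_const_def by simp

text \<open>The constant solves K = K beta^(1-1/d) + max c 0, so the cut sizes of a part of size at most
  beta n and of the split above it add up to at most K n^(1-1/d).\<close>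
lemma cut_const_recurrence:
  assumes "0 < beta" "beta < 1" "0 < 1 - 1 / d"
    and "X \<le> cut_const beta c d * m powr (1 - 1 / d)" "0 \<le> m" "m \<le> beta * n"
    and "Y \<le> c * n powr (1 - 1 / d)"
  shows "X + Y \<le> cut_const beta c d * n powr (1 - 1 / d)"
proof -
  define a where "a = 1 - 1 / d"
  define K where "K = cut_const beta c d"
  have "beta powr a < 1" using assms(1-3) unfolding a_def by (simp add: powr01_less_one)
  then have K: "K * beta powr a + max c 0 = K"
    unfolding K_def cut_const_def a_def[symmetric] by (simp add: divide_simps algebra_simps)
  have "m powr a \<le> (beta * n) powr a"
    using assms(3,5,6) unfolding a_def by (intro powr_mono2) auto
  also have "\<dots> = beta powr a * n powr a" using assms(1,5,6) by (simp add: powr_mult)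
  finally have "K * m powr a \<le> K * (beta powr a * n powr a)"
    using cut_const_nonneg[OF assms(1-3)] unfolding K_def by (rule mult_left_mono)
  moreover have "c * n powr a \<le> max c 0 * n powr a" by (intro mult_right_mono) auto
  ultimately have "X + Y \<le> (K * beta powr a + max c 0) * n powr a"
    using assms(4,7) unfolding K_def[symmetric] a_def[symmetric] by (simp add: algebra_simps)
  with K show ?thesis unfolding K_def a_def by simp
qed

text \<open>Cutting the leaf order of t after its first a vertices does not split an unrefined leaf.\<close>
fun clean_cut :: "nat \<Rightarrow> 'a rtree \<Rightarrow> bool" where
  "clean_cut a (Leaf v) = True"
| "clean_cut a (Unref xs) = (a = 0 \<or> length xs \<le> a)"
| "clean_cut a (Node l r) =
     (if a \<le> length (vlist l) then clean_cut a l else clean_cut (a - length (vlist l)) r)"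

lemma ecount_take_drop_le:
  assumes "splits_ok (split_ok E beta c d) t" "distinct (vlist t)" "clean_cut a t"
    and "0 < beta" "beta < 1" "0 < 1 - 1 / d"
  shows "real (ecount E (set (take a (vlist t))) (set (drop a (vlist t))))
           \<le> cut_const beta c d * real (length (vlist t)) powr (1 - 1 / d)"
  using assms(1-3)
proof (induction t arbitrary: a)
  case (Leaf v)
  then show ?case
    using cut_const_nonneg[OF assms(4-6)] by (cases a) (auto simp: ecount_def)
next
  case (Unref xs)
  then have "take a xs = [] \<or> drop a xs = []" by auto
  then show ?case using cut_const_nonneg[OF assms(4-6)] by (auto simp: ecount_def)
next
  case (Node l r)
  let ?vl = "vlist l" and ?vr = "vlist r"
  have split: "split_ok E beta c d (set ?vl) (set ?vr)" and dist: "distinct (?vl @ ?vr)"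
    using Node.prems(1,2) by auto
  note sizes = split_ok_lengths[OF split dist]
  show ?case
  proof (cases "a \<le> length ?vl")
    case True
    have "ecount E (set (take a ?vl)) (set (drop a ?vl @ ?vr))
        \<le> ecount E (set (take a ?vl)) (set (drop a ?vl)) + ecount E (set (take a ?vl)) (set ?vr)"
      using ecount_Un_right_le[of "set (take a ?vl)" "set (drop a ?vl)" "set ?vr" E] by simp
    also have "ecount E (set (take a ?vl)) (set ?vr) \<le> ecount E (set ?vl) (set ?vr)"
      by (intro ecount_mono) (auto dest: in_set_takeD)
    finally show ?thesis
      using cut_const_recurrence[OF assms(4-6) Node.IH(1)[of a] _ sizes(1) sizes(3)]
        Node.prems True by simp
  next
    case False
    let ?a = "a - length ?vl"
    have "ecount E (set (?vl @ take ?a ?vr)) (set (drop ?a ?vr))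
        \<le> ecount E (set ?vl) (set (drop ?a ?vr)) + ecount E (set (take ?a ?vr)) (set (drop ?a ?vr))"
      using ecount_Un_left_le[of "set ?vl" "set (take ?a ?vr)" "set (drop ?a ?vr)" E] by simp
    also have "ecount E (set ?vl) (set (drop ?a ?vr)) \<le> ecount E (set ?vl) (set ?vr)"
      by (intro ecount_mono) (auto dest: in_set_dropD)
    finally show ?thesis
      using cut_const_recurrence[OF assms(4-6) Node.IH(2)[of ?a] _ sizes(2) sizes(3)]
        Node.prems False by (simp add: add.commute)
  qed
qed

definition seg_offset :: "('a list \<times> bool) list \<Rightarrow> nat \<Rightarrow> nat" where
  "seg_offset sg m = length (concat (map fst (take m sg)))"

definition clean_cut_segs :: "nat \<Rightarrow> ('a list \<times> bool) list \<Rightarrow> bool" where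
  "clean_cut_segs a sg \<longleftrightarrow> (\<forall>m < length sg. snd (sg ! m) \<longrightarrow>
      \<not> (seg_offset sg m < a \<and> a < seg_offset sg m + length (fst (sg ! m))))"

lemma clean_cut_segs_Node_left:
  assumes "clean_cut_segs a (segs l @ segs r)" "a \<le> length (vlist l)"
  shows "clean_cut_segs a (segs l)"
  unfolding clean_cut_segs_def
proof (intro allI impI)
  fix m assume m: "m < length (segs l)" "snd (segs l ! m)"
  then have "(segs l @ segs r) ! m = segs l ! m" "take m (segs l @ segs r) = take m (segs l)"
    by (auto simp: nth_append)
  with assms(1) m show "\<not> (seg_offset (segs l) m < a \<and> a < seg_offset (segs l) m + length (fst (segs l ! m)))"
    unfolding clean_cut_segs_def seg_offset_def by (metis length_append trans_less_add1)
qed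

lemma clean_cut_segs_Node_right:
  assumes "clean_cut_segs a (segs l @ segs r)" "length (vlist l) < a"
  shows "clean_cut_segs (a - length (vlist l)) (segs r)"
  unfolding clean_cut_segs_def
proof (intro allI impI)
  fix m assume m: "m < length (segs r)" "snd (segs r ! m)"
  define m' where "m' = length (segs l) + m"
  have m': "(segs l @ segs r) ! m' = segs r ! m" "m' < length (segs l @ segs r)"
    using m(1) unfolding m'_def by (simp_all add: nth_append)
  then have "\<not> (seg_offset (segs l @ segs r) m' < a \<and>
      a < seg_offset (segs l @ segs r) m' + length (fst (segs r ! m)))"
    using assms(1) m(2) unfolding clean_cut_segs_def by metis
  moreover have "seg_offset (segs l @ segs r) m' = length (vlist l) + seg_offset (segs r) m"
    unfolding seg_offset_def m'_def by (simp add: concat_map_fst_segs)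
  ultimately show "\<not> (seg_offset (segs r) m < a - length (vlist l) \<and>
      a - length (vlist l) < seg_offset (segs r) m + length (fst (segs r ! m)))"
    using assms(2) by linarith
qed

lemma clean_cut_segs_imp_clean_cut: "clean_cut_segs a (segs t) \<Longrightarrow> clean_cut a t"
proof (induction t arbitrary: a)
  case (Unref xs)
  then show ?case unfolding clean_cut_segs_def seg_offset_def by auto
next
  case (Node l r)
  then show ?case
    using clean_cut_segs_Node_left[of a l r] clean_cut_segs_Node_right[of a l r] by (simp add: not_le)
qed simp

section \<open>The red-blue array\<close>

lemma wsum_append: "wsum V E P (xs @ ys) = wsum V E P xs + wsum V E P ys"
  unfolding wsum_def by simp

lemma downward_closed_eq_lessThan_card:
  fixes S :: "nat set"
  assumes "finite S" "\<And>n k. n \<in> S \<Longrightarrow> k < n \<Longrightarrow> k \<in> S"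
  shows "S = {..<card S}"
proof (cases "S = {}")
  case False
  have "S = {..Max S}"
    using Max_ge[OF assms(1)] Max_in[OF assms(1) False] assms(2) by (auto simp: le_less)
  then show ?thesis by (metis card_atMost lessThan_Suc_atMost)
qed simp

context
  fixes V :: "'a set" and E :: "'a \<Rightarrow> 'a \<Rightarrow> bool" and P :: "'a set" and vs :: "'a list"
begin

abbreviation "bp \<equiv> bluepos V E P vs"

definition blues_before :: "nat \<Rightarrow> nat" where
  "blues_before e = card {n. n < length vs \<and> bp n < e}"

definition red_prefix :: "nat \<Rightarrow> nat" where
  "red_prefix a = (\<Sum>n<a. outgoing V E P {vs ! n})"

lemma bluepos_Suc: "a < length vs \<Longrightarrow> bp (Suc a) = bp a + 1 + outgoing V E P {vs ! a}"
  unfolding bluepos_def by (simp add: take_Suc_conv_app_nth wsum_append wsum_def)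

lemma bluepos_eq_red_prefix: "a \<le> length vs \<Longrightarrow> bp a = a + red_prefix a"
proof (induction a)
  case 0
  then show ?case unfolding bluepos_def wsum_def red_prefix_def by simp
next
  case (Suc a)
  then show ?case using bluepos_Suc[of a] unfolding red_prefix_def by simp
qed

lemma bluepos_add: "bp (n + k) = bp n + wsum V E P (take k (drop n vs))"
  unfolding bluepos_def by (simp add: take_add wsum_append)

lemma bluepos_mono: "n \<le> m \<Longrightarrow> bp n \<le> bp m"
  using bluepos_add[of n "m - n"] by simp

lemma bluepos_strict_mono: "n < m \<Longrightarrow> m \<le> length vs \<Longrightarrow> bp n < bp m"
  using bluepos_mono[of "Suc n" m] bluepos_Suc[of n] by simp

lemma bluepos_length: "bp (length vs) = wsum V E P vs"
  unfolding bluepos_def by simp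

lemma blues_before_set: "{n. n < length vs \<and> bp n < e} = {..<blues_before e}"
  unfolding blues_before_def
proof (rule downward_closed_eq_lessThan_card)
  fix n k assume "n \<in> {n. n < length vs \<and> bp n < e}" "k < n"
  then show "k \<in> {n. n < length vs \<and> bp n < e}" using bluepos_mono[of k n] by auto
qed simp

lemma blues_before_le_length: "blues_before e \<le> length vs"
  unfolding blues_before_def by (rule order_trans[OF card_mono[of "{..<length vs}"]]) auto

lemma less_blues_before_iff: "n < length vs \<Longrightarrow> n < blues_before e \<longleftrightarrow> bp n < e"
  using blues_before_set[of e] by (auto simp: set_eq_iff)

lemma blues_before_mono: "e1 \<le> e2 \<Longrightarrow> blues_before e1 \<le> blues_before e2"
  unfolding blues_before_def by (intro card_mono) auto

lemma blues_before_bluepos: "a \<le> length vs \<Longrightarrow> blues_before (bp a) = a"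
proof -
  assume a: "a \<le> length vs"
  have "{n. n < length vs \<and> bp n < bp a} = {..<a}"
    using a bluepos_strict_mono[of _ a] bluepos_mono[of a] by (auto simp: not_le[symmetric])
  then show ?thesis unfolding blues_before_def by simp
qed

lemma blues_before_interval:
  "{n. n < length vs \<and> e1 \<le> bp n \<and> bp n < e2} = {..<blues_before e2} - {..<blues_before e1}"
proof (rule set_eqI)
  fix n
  show "n \<in> {n. n < length vs \<and> e1 \<le> bp n \<and> bp n < e2} \<longleftrightarrow>
      n \<in> {..<blues_before e2} - {..<blues_before e1}"
    using less_blues_before_iff[of n e1] less_blues_before_iff[of n e2]
      blues_before_le_length[of e2] by (cases "n < length vs") auto
qed

lemma blues_before_diff_le: "e1 \<le> e2 \<Longrightarrow> blues_before e2 - blues_before e1 \<le> e2 - e1"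
proof -
  assume "e1 \<le> e2"
  let ?X = "{n. n < length vs \<and> e1 \<le> bp n \<and> bp n < e2}"
  have "inj_on bp ?X"
  proof (rule inj_onI)
    fix x y assume "x \<in> ?X" "y \<in> ?X" "bp x = bp y"
    then show "x = y" using bluepos_strict_mono[of x y] bluepos_strict_mono[of y x]
      by (cases x y rule: linorder_cases) auto
  qed
  moreover have "bp ` ?X \<subseteq> {e1..<e2}" by auto
  ultimately have "card ?X \<le> e2 - e1" using card_inj_on_le[of bp ?X "{e1..<e2}"] by simp
  then show ?thesis unfolding blues_before_interval by simp
qed

lemma blue_in_eq_blues_before:
  "i \<le> j \<Longrightarrow> blue_in V E P vs i j = blues_before j - blues_before i"
  unfolding blue_in_def blues_before_interval
  by (simp add: card_Diff_subset blues_before_mono)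

lemma bluepos_blues_before_ge: "e \<le> wsum V E P vs \<Longrightarrow> e \<le> bp (blues_before e)"
  using less_blues_before_iff[of "blues_before e" e] blues_before_le_length[of e] bluepos_length
  by (cases "blues_before e < length vs") auto

lemma bluepos_blues_before_le:
  assumes "\<And>v. v \<in> set vs \<Longrightarrow> outgoing V E P {v} \<le> M"
  shows "bp (blues_before e) \<le> e + M"
proof (cases "blues_before e")
  case 0
  then show ?thesis unfolding bluepos_def wsum_def by simp
next
  case (Suc a)
  then have "a < length vs" using blues_before_le_length[of e] by simp
  then have "bp a < e" and "outgoing V E P {vs ! a} \<le> M"
    using less_blues_before_iff[of a e] Suc assms by simp_all
  then show ?thesis using bluepos_Suc[OF \<open>a < length vs\<close>] Suc by simp
qed

text \<open>The red elements before position e, e - blues_before e, differ from those in the blocks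
  of the first blues_before e vertices by at most the maximal degree.\<close>
lemma red_prefix_blues_before_bounds:
  assumes "e \<le> wsum V E P vs" "\<And>v. v \<in> set vs \<Longrightarrow> outgoing V E P {v} \<le> M"
  shows "real e - real (blues_before e) \<le> real (red_prefix (blues_before e))"
    and "real (red_prefix (blues_before e)) \<le> real e - real (blues_before e) + real M"
  using bluepos_blues_before_ge[OF assms(1)] bluepos_blues_before_le[OF assms(2), of e]
    bluepos_eq_red_prefix[OF blues_before_le_length, of e] by linarith+

lemma red_prefix_mono: "a \<le> b \<Longrightarrow> red_prefix a \<le> red_prefix b"
  unfolding red_prefix_def by (intro sum_mono2) auto

lemma red_prefix_diff:
  "a1 \<le> a2 \<Longrightarrow> red_prefix a2 = red_prefix a1 + (\<Sum>n\<in>{a1..<a2}. outgoing V E P {vs ! n})"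
  unfolding red_prefix_def lessThan_atLeast0 by (simp add: sum.atLeastLessThan_concat)

lemma red_prefix_add:
  assumes "s + l \<le> length vs"
  shows "red_prefix (s + l) = red_prefix s + sum_list (map (\<lambda>v. outgoing V E P {v}) (take l (drop s vs)))"
proof -
  have "sum_list (map (\<lambda>v. outgoing V E P {v}) (take l (drop s vs)))
      = (\<Sum>i = 0..<l. outgoing V E P {vs ! (s + i)})"
    using assms by (simp add: sum.list_conv_set_nth)
  also have "\<dots> = (\<Sum>n\<in>{s..<s + l}. outgoing V E P {vs ! n})"
    using sum.shift_bounds_nat_ivl[of "\<lambda>n. outgoing V E P {vs ! n}" 0 s l] by (simp add: add.commute)
  finally show ?thesis using red_prefix_diff[of s "s + l"] by simp
qed

lemma blues_reds_within_block:
  assumes "s + l \<le> length vs" "bp s \<le> e" "e \<le> bp (s + l)" "bp s \<le> e'" "e' \<le> bp (s + l)"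
  shows "\<bar>real (blues_before e) - real (blues_before e')\<bar> \<le> real l"
    and "\<bar>(real e - real (blues_before e)) - (real e' - real (blues_before e'))\<bar>
           \<le> real (red_prefix (s + l)) - real (red_prefix s)"
proof -
  have bounds: "s \<le> blues_before x \<and> blues_before x \<le> s + l \<and>
      real (red_prefix s) \<le> real x - real (blues_before x) \<and>
      real x - real (blues_before x) \<le> real (red_prefix (s + l))"
    if "bp s \<le> x" "x \<le> bp (s + l)" for x
  proof -
    have "blues_before (bp s) = s" "blues_before (bp (s + l)) = s + l"
      using blues_before_bluepos assms(1) by simp_all
    then show ?thesis
      using that blues_before_mono[OF that(1)] blues_before_mono[OF that(2)]
        blues_before_diff_le[OF that(1)] blues_before_diff_le[OF that(2)]
        bluepos_eq_red_prefix[of s] bluepos_eq_red_prefix[of "s + l"] assms(1) by simp linarith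
  qed
  show "\<bar>real (blues_before e) - real (blues_before e')\<bar> \<le> real l"
    using bounds[OF assms(2,3)] bounds[OF assms(4,5)] by linarith
  show "\<bar>(real e - real (blues_before e)) - (real e' - real (blues_before e'))\<bar>
      \<le> real (red_prefix (s + l)) - real (red_prefix s)"
    using bounds[OF assms(2,3)] bounds[OF assms(4,5)] by linarith
qed

lemma take_length_concat_take: "take (length (concat (take m xss))) (concat xss) = concat (take m xss)"
  by (metis append_eq_conv_conj append_take_drop_id concat_append)

context
  fixes sg :: "('a list \<times> bool) list"
  assumes concat_sg: "concat (map fst sg) = vs"
begin

lemma take_seg_offset: "take (seg_offset sg m) vs = concat (map fst (take m sg))"
  unfolding seg_offset_def concat_sg[symmetric]
  using take_length_concat_take[of m "map fst sg"] by (simp add: take_map)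

lemma seg_offset_le: "seg_offset sg m \<le> length vs"
proof -
  have "length (take (seg_offset sg m) vs) = seg_offset sg m"
    using take_seg_offset[of m] unfolding seg_offset_def by simp
  then show ?thesis by simp
qed

lemma seg_offset_Suc: "m < length sg \<Longrightarrow> seg_offset sg (Suc m) = seg_offset sg m + length (fst (sg ! m))"
  unfolding seg_offset_def by (simp add: take_Suc_conv_app_nth)

lemma seg_offset_mono: "m \<le> m' \<Longrightarrow> seg_offset sg m \<le> seg_offset sg m'"
  unfolding seg_offset_def by (metis append_take_drop_id concat_append le_add1 length_append
      map_append min.absorb1 take_take)

lemma seg_start_eq_bluepos: "seg_start V E P sg m = bp (seg_offset sg m)"
  unfolding seg_start_def bluepos_def take_seg_offset by simp

lemma seg_end_eq_bluepos:
  "m < length sg \<Longrightarrow> seg_end V E P sg m = bp (seg_offset sg m + length (fst (sg ! m)))"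
  unfolding seg_end_def seg_start_def bluepos_def
  by (simp add: seg_offset_Suc[symmetric] take_seg_offset take_Suc_conv_app_nth wsum_append)

lemma seg_start_not_inside:
  assumes "m < length sg"
  shows "\<not> (seg_start V E P sg m < seg_start V E P sg k \<and> seg_start V E P sg k < seg_end V E P sg m)"
proof (cases "k \<le> m")
  case True
  then show ?thesis using bluepos_mono[OF seg_offset_mono[OF True]] by (simp add: seg_start_eq_bluepos)
next
  case False
  then have "bp (seg_offset sg (Suc m)) \<le> bp (seg_offset sg k)"
    by (intro bluepos_mono seg_offset_mono) simp
  then show ?thesis
    using assms by (simp add: seg_start_eq_bluepos seg_end_eq_bluepos seg_offset_Suc)
qed

lemma moved_end_not_inside:
  assumes "moved_end V E P sg e e'" "m < length sg"
  shows "\<not> (seg_start V E P sg m < e' \<and> e' < seg_end V E P sg m \<and> snd (sg ! m))"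
proof (cases "\<exists>m < length sg. snd (sg ! m) \<and> seg_start V E P sg m < e \<and> e < seg_end V E P sg m")
  case True
  then obtain k where "k < length sg" "e' = seg_start V E P sg k \<or> e' = seg_start V E P sg (Suc k)"
    using assms(1) unfolding moved_end_def
    by (auto simp: seg_start_eq_bluepos seg_end_eq_bluepos seg_offset_Suc)
  then show ?thesis using seg_start_not_inside[OF assms(2)] by auto
next
  case False
  then show ?thesis using assms unfolding moved_end_def by auto
qed

lemma moved_end_clean_cut:
  assumes "moved_end V E P sg e e'"
  shows "clean_cut_segs (blues_before e') sg"
  unfolding clean_cut_segs_def
proof (intro allI impI notI)
  fix m assume m: "m < length sg" "snd (sg ! m)"
    and inside: "seg_offset sg m < blues_before e' \<and>
      blues_before e' < seg_offset sg m + length (fst (sg ! m))"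
  have "seg_offset sg m + length (fst (sg ! m)) \<le> length vs"
    using seg_offset_Suc[OF m(1)] seg_offset_le[of "Suc m"] by simp
  then have "bp (seg_offset sg m) < e'" "e' \<le> bp (blues_before e')"
    "bp (blues_before e') < bp (seg_offset sg m + length (fst (sg ! m)))"
    using less_blues_before_iff[of "seg_offset sg m" e'] less_blues_before_iff[of "blues_before e'" e']
      inside bluepos_strict_mono by auto
  then show False
    using moved_end_not_inside[OF assms m(1)] m(2)
    by (simp add: seg_start_eq_bluepos seg_end_eq_bluepos[OF m(1)])
qed

lemma take_drop_seg_offset:
  "m < length sg \<Longrightarrow> take (length (fst (sg ! m))) (drop (seg_offset sg m) vs) = fst (sg ! m)"
  using take_seg_offset[of "Suc m"] take_seg_offset[of m] seg_offset_Suc[of m]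
  by (simp add: take_Suc_conv_app_nth take_add)

lemma moved_end_close:
  assumes "moved_end V E P sg e e'" "e \<le> wsum V E P vs" "distinct vs" "finite V"
    and "0 \<le> U" "0 \<le> H"
    and small: "\<And>xs. (xs, True) \<in> set sg \<Longrightarrow>
      real (length xs) \<le> U \<and> real (outgoing V E P (set xs)) \<le> H"
  shows "\<bar>real (blues_before e) - real (blues_before e')\<bar> \<le> U"
    and "\<bar>(real e - real (blues_before e)) - (real e' - real (blues_before e'))\<bar> \<le> H"
    and "e' \<le> wsum V E P vs"
proof -
  have "\<bar>real (blues_before e) - real (blues_before e')\<bar> \<le> U \<and>
      \<bar>(real e - real (blues_before e)) - (real e' - real (blues_before e'))\<bar> \<le> H \<and>
      e' \<le> wsum V E P vs"
  proof (cases "\<exists>m < length sg. snd (sg ! m) \<and> seg_start V E P sg m < e \<and> e < seg_end V E P sg m")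
    case True
    then obtain m where m: "m < length sg" "snd (sg ! m)"
      "seg_start V E P sg m < e" "e < seg_end V E P sg m"
      "e' = seg_start V E P sg m \<or> e' = seg_end V E P sg m"
      using assms(1) unfolding moved_end_def by auto
    define xs where "xs = fst (sg ! m)"
    define s where "s = seg_offset sg m"
    have "(xs, True) \<in> set sg" using m(1,2) nth_mem[OF m(1)] unfolding xs_def
      by (metis prod.collapse)
    have sl: "s + length xs \<le> length vs"
      unfolding s_def xs_def using seg_offset_Suc[OF m(1)] seg_offset_le[of "Suc m"] by simp
    have xs: "take (length xs) (drop s vs) = xs"
      unfolding xs_def s_def using take_drop_seg_offset[OF m(1)] .
    have block: "bp s \<le> e" "e \<le> bp (s + length xs)" "bp s \<le> e'" "e' \<le> bp (s + length xs)"
      using m(3-5) seg_end_eq_bluepos[OF m(1)] unfolding seg_start_eq_bluepos s_def xs_def by auto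
    have "distinct xs" using assms(3) xs by (metis distinct_drop distinct_take)
    then have "real (red_prefix (s + length xs)) - real (red_prefix s) = real (outgoing V E P (set xs))"
      using red_prefix_add[OF sl] xs outgoing_eq_sum_singletons[OF finite_set assms(4)]
      by (simp add: sum_list_distinct_conv_sum_set)
    moreover have "e' \<le> wsum V E P vs"
      using block(4) bluepos_mono[OF sl] bluepos_length by simp
    ultimately show ?thesis
      using blues_reds_within_block[OF sl block] small[OF \<open>(xs, True) \<in> set sg\<close>] by linarith
  next
    case False
    then show ?thesis using assms(1,2,5,6) unfolding moved_end_def by auto
  qed
  then show "\<bar>real (blues_before e) - real (blues_before e')\<bar> \<le> U"
    and "\<bar>(real e - real (blues_before e)) - (real e' - real (blues_before e'))\<bar> \<le> H"
    and "e' \<le> wsum V E P vs" by auto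
qed

lemma moved_subarray_balance:
  assumes "i \<le> j" "j \<le> wsum V E P vs" "distinct vs" "finite V"
    and blue: "\<bar>2 * real (blue_in V E P vs i j) - real (length vs)\<bar> \<le> 2"
    and red: "\<bar>2 * real ((j - i) - blue_in V E P vs i j) - real (red_prefix (length vs))\<bar> \<le> 2"
    and moved: "moved_end V E P sg i i'" "moved_end V E P sg j j'"
    and "0 \<le> U" "0 \<le> H"
    and small: "\<And>xs. (xs, True) \<in> set sg \<Longrightarrow>
      real (length xs) \<le> U \<and> real (outgoing V E P (set xs)) \<le> H"
    and deg: "\<And>v. v \<in> set vs \<Longrightarrow> outgoing V E P {v} \<le> M"
  shows "\<bar>2 * real (blues_before j' - blues_before i') - real (length vs)\<bar> \<le> 2 + 4 * U"
    and "\<bar>2 * real (red_prefix (blues_before j') - red_prefix (blues_before i'))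
           - real (red_prefix (length vs))\<bar> \<le> 2 + 4 * real M + 4 * H"
proof -
  define a1 where "a1 = blues_before i'"
  define a2 where "a2 = blues_before j'"
  define bi where "bi = blues_before i"
  define bj where "bj = blues_before j"
  note close_i = moved_end_close[OF moved(1) _ assms(3,4,9,10) small]
  note close_j = moved_end_close[OF moved(2) assms(2-4,9,10) small]
  have "bi \<le> bj" "bj - bi \<le> j - i"
    unfolding bi_def bj_def using blues_before_mono[OF assms(1)] blues_before_diff_le[OF assms(1)]
    by simp_all
  then have blue': "\<bar>2 * (real bj - real bi) - real (length vs)\<bar> \<le> 2"
    and red': "\<bar>2 * ((real j - real bj) - (real i - real bi)) - real (red_prefix (length vs))\<bar> \<le> 2"
    using blue red assms(1) unfolding blue_in_eq_blues_before[OF assms(1)] bi_def bj_def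
    by (simp_all add: of_nat_diff)
  have "\<bar>real bi - real a1\<bar> \<le> U" "\<bar>real bj - real a2\<bar> \<le> U"
    using close_i(1) close_j(1) assms(1,2) unfolding a1_def a2_def bi_def bj_def by simp_all
  then show "\<bar>2 * real (blues_before j' - blues_before i') - real (length vs)\<bar> \<le> 2 + 4 * U"
    using blue' unfolding a1_def[symmetric] a2_def[symmetric] abs_le_iff
    by (cases "a1 \<le> a2") (simp_all add: of_nat_diff)
  have "\<bar>(real i - real bi) - (real i' - real a1)\<bar> \<le> H"
    "\<bar>(real j - real bj) - (real j' - real a2)\<bar> \<le> H"
    using close_i(2) close_j(2) assms(1,2) unfolding a1_def a2_def bi_def bj_def by simp_all
  moreover have "real i' - real a1 \<le> real (red_prefix a1)" "real (red_prefix a1) \<le> real i' - real a1 + real M"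
    "real j' - real a2 \<le> real (red_prefix a2)" "real (red_prefix a2) \<le> real j' - real a2 + real M"
    using red_prefix_blues_before_bounds[OF _ deg] close_i(3) close_j(3) assms(1,2)
    unfolding a1_def a2_def by (meson order_trans)+
  moreover have "a2 < a1 \<Longrightarrow> red_prefix a2 \<le> red_prefix a1" by (simp add: red_prefix_mono)
  ultimately show "\<bar>2 * real (red_prefix (blues_before j') - red_prefix (blues_before i'))
      - real (red_prefix (length vs))\<bar> \<le> 2 + 4 * real M + 4 * H"
    using red' unfolding a1_def[symmetric] a2_def[symmetric] abs_le_iff
    by (cases "red_prefix a1 \<le> red_prefix a2") (simp_all add: of_nat_diff)
qed

end

lemma vertices_between_eq_slice:
  "{vs ! n | n. n < length vs \<and> i' \<le> bp n \<and> bp n < j'}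
     = (!) vs ` {blues_before i'..<blues_before j'}"
proof (intro set_eqI iffI)
  fix x assume "x \<in> {vs ! n | n. n < length vs \<and> i' \<le> bp n \<and> bp n < j'}"
  then obtain n where "x = vs ! n" "n < length vs" "i' \<le> bp n" "bp n < j'" by blast
  then show "x \<in> (!) vs ` {blues_before i'..<blues_before j'}"
    using less_blues_before_iff[of n i'] less_blues_before_iff[of n j'] by auto
next
  fix x assume "x \<in> (!) vs ` {blues_before i'..<blues_before j'}"
  then obtain n where n: "x = vs ! n" "blues_before i' \<le> n" "n < blues_before j'" by auto
  then have "n < length vs" using blues_before_le_length[of j'] by simp
  then show "x \<in> {vs ! n | n. n < length vs \<and> i' \<le> bp n \<and> bp n < j'}"
    using n less_blues_before_iff[of n i'] less_blues_before_iff[of n j'] by auto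
qed

lemma outgoing_slice:
  assumes "distinct vs" "finite V" "a2 \<le> length vs"
  shows "outgoing V E P ((!) vs ` {a1..<a2}) = red_prefix a2 - red_prefix a1"
proof (cases "a1 \<le> a2")
  case True
  have "inj_on ((!) vs) {a1..<a2}" using assms(1,3) by (intro inj_on_nth) auto
  then have "outgoing V E P ((!) vs ` {a1..<a2}) = (\<Sum>n\<in>{a1..<a2}. outgoing V E P {vs ! n})"
    using outgoing_eq_sum_singletons[OF finite_imageI[OF finite_atLeastLessThan] assms(2)]
    by (simp only: sum.reindex comp_def)
  then show ?thesis using red_prefix_diff[OF True] by simp
next
  case False
  then show ?thesis using red_prefix_mono[of a2 a1] by (simp add: outgoing_def ecount_def)
qed

lemma red_prefix_length:
  assumes "distinct vs" "finite V"
  shows "red_prefix (length vs) = outgoing V E P (set vs)"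
  using outgoing_eq_sum_singletons[OF finite_set assms(2), of E P vs]
    sum_list_distinct_conv_sum_set[OF assms(1), of "\<lambda>v. outgoing V E P {v}"]
  unfolding red_prefix_def by (simp add: sum_list_sum_nth atLeast0LessThan)

end

section \<open>The output of RelaxBalancedPartition\<close>

lemma card_nth_image_atLeastLessThan:
  "distinct xs \<Longrightarrow> a2 \<le> length xs \<Longrightarrow> card ((!) xs ` {a1..<a2}) = a2 - a1"
  by (subst card_image) (auto intro: inj_on_nth)

lemma ecount_slice_le:
  fixes l h :: nat
  assumes "\<And>u v. E u v = E v u" "h \<le> length vs"
  defines "A \<equiv> (!) vs ` {l..<h}"
  shows "ecount E A (set vs - A) \<le> ecount E (set (take l vs)) (set (drop l vs))
                                   + ecount E (set (take h vs)) (set (drop h vs))"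
proof -
  have nth_take: "vs ! k \<in> set (take a vs)" if "k < a" "k < length vs" for k a
  proof -
    have "take a vs ! k = vs ! k" "k < length (take a vs)" using that by simp_all
    then show ?thesis by (metis nth_mem)
  qed
  have nth_drop: "vs ! k \<in> set (drop a vs)" if "a \<le> k" "k < length vs" for k a
  proof -
    have "drop a vs ! (k - a) = vs ! k" "k - a < length (drop a vs)" using that by simp_all
    then show ?thesis by (metis nth_mem)
  qed
  have A_sub: "A \<subseteq> set (drop l vs) \<inter> set (take h vs)"
    unfolding A_def using assms(2) nth_take nth_drop by auto
  have rest_sub: "set vs - A \<subseteq> set (take l vs) \<union> set (drop h vs)"
  proof
    fix y assume "y \<in> set vs - A"
    then obtain k where "k < length vs" "y = vs ! k" by (auto simp: in_set_conv_nth)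
    moreover have "\<not> (l \<le> k \<and> k < h)" if "y = vs ! k" for k
      using \<open>y \<in> set vs - A\<close> that unfolding A_def by auto
    ultimately have "k < length vs" "y = vs ! k" "\<not> (l \<le> k \<and> k < h)" by auto
    then show "y \<in> set (take l vs) \<union> set (drop h vs)" using nth_take nth_drop by auto
  qed
  have "ecount E A (set vs - A) \<le> ecount E A (set (take l vs)) + ecount E A (set (drop h vs))"
    using ecount_mono[OF order_refl rest_sub] ecount_Un_right_le[of A] unfolding A_def
    by (meson finite_Un finite_imageI finite_atLeastLessThan finite_set order_trans)
  also have "ecount E A (set (take l vs)) \<le> ecount E (set (drop l vs)) (set (take l vs))"
    using A_sub by (intro ecount_mono) auto
  also have "ecount E A (set (drop h vs)) \<le> ecount E (set (take h vs)) (set (drop h vs))"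
    using A_sub by (intro ecount_mono) auto
  also have "ecount E (set (drop l vs)) (set (take l vs)) = ecount E (set (take l vs)) (set (drop l vs))"
    using assms(1) by (rule ecount_commute)
  finally show ?thesis by simp
qed

lemma log2_nonneg: "0 \<le> log 2 (real n)"
  by (cases "n = 0") (simp_all add: log_def)

lemma le_log2_of_powr_le: "2 powr y \<le> real n \<Longrightarrow> y \<le> log 2 (real n)"
proof -
  assume le: "2 powr y \<le> real n"
  then have "0 < real n" using powr_gt_zero[of 2 y] by linarith
  then show ?thesis using le_log_iff[of 2 "real n" y] le by simp
qed

lemma cube_le_inv_power_upper_depth:
  assumes "0 < beta" "beta < 1" "1 \<le> L"
  shows "L ^ 3 \<le> (1 / beta) ^ nat \<lceil>3 * log (1 / beta) L\<rceil>"
proof -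
  have "1 < 1 / beta" using assms(1,2) by simp
  have "(1 / beta) powr log (1 / beta) L = L"
    using \<open>1 < 1 / beta\<close> assms by (intro powr_log_cancel) auto
  then have "L ^ 3 = ((1 / beta) powr log (1 / beta) L) powr 3"
    using assms(3) by (simp add: powr_realpow)
  also have "\<dots> = (1 / beta) powr (3 * log (1 / beta) L)"
    by (simp add: powr_powr mult.commute)
  also have "\<dots> \<le> (1 / beta) powr real (nat \<lceil>3 * log (1 / beta) L\<rceil>)"
    using \<open>1 < 1 / beta\<close> by (intro powr_mono) linarith+
  also have "\<dots> = (1 / beta) ^ nat \<lceil>3 * log (1 / beta) L\<rceil>"
    using assms(1) by (intro powr_realpow) simp
  finally show ?thesis .
qed

lemma relax_tree_unrefined_small:
  assumes tree: "relax_tree V E beta c d P t" and unref: "(xs, True) \<in> set (segs t)"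
    and "finite V" "P \<subseteq> V" "0 < beta" "beta < 1"
  defines "L \<equiv> log 2 (real (gsize V E))"
  shows "real (length xs) \<le> 1 + real (card P) / L ^ 3"
    and "real (outgoing V E P (set xs)) \<le> real (outgoing V E P P) / L ^ 2"
proof -
  have up: "upper_ok (split_ok E beta c d) (heavy V E P) (upper_depth beta (gsize V E)) t"
    and "distinct (vlist t)" and "set (vlist t) = P"
    using tree unfolding relax_tree_def by auto
  then have n: "length (vlist t) = card P" by (metis distinct_card)
  show "real (outgoing V E P (set xs)) \<le> real (outgoing V E P P) / L ^ 2"
    using upper_ok_unrefined_light[OF up unref] unfolding heavy_def L_def by simp
  have "0 \<le> real (card P) / L ^ 3" unfolding L_def using log2_nonneg by simp
  show "real (length xs) \<le> 1 + real (card P) / L ^ 3"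
  proof (cases "length xs = 1")
    case False
    define D where "D = upper_depth beta (gsize V E)"
    have len: "real (length xs) * (1 / beta) ^ D \<le> real (card P)"
      using upper_ok_unrefined_length[OF up \<open>distinct (vlist t)\<close> assms(5) unref False] n
      unfolding D_def by simp
    show ?thesis
    proof (cases "1 \<le> L")
      case True
      have "L ^ 3 \<le> (1 / beta) ^ D"
        unfolding D_def upper_depth_def L_def[symmetric]
        using cube_le_inv_power_upper_depth[OF assms(5,6) True] .
      then have "real (length xs) * L ^ 3 \<le> real (card P)"
        using len by (meson mult_left_mono of_nat_0_le_iff order_trans)
      moreover have "0 < L ^ 3" using True by simp
      ultimately have "real (length xs) \<le> real (card P) / L ^ 3" by (simp add: pos_le_divide_eq)
      then show ?thesis by simp
    next
      case False
      then have "\<not> 2 powr 1 \<le> real (gsize V E)" using le_log2_of_powr_le unfolding L_def by fastforce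
      then have "card V \<le> 1" unfolding gsize_def by simp
      then have "card P \<le> 1" using card_mono[OF \<open>finite V\<close> \<open>P \<subseteq> V\<close>] by simp
      moreover have "1 \<le> (1 / beta) ^ D" using assms(5,6) by (intro one_le_power) simp
      then have "real (length xs) * 1 \<le> real (length xs) * (1 / beta) ^ D"
        by (intro mult_left_mono) auto
      then have "real (length xs) \<le> real (card P)" using len by simp
      ultimately show ?thesis using \<open>0 \<le> real (card P) / L ^ 3\<close> by linarith
    qed
  qed (use \<open>0 \<le> real (card P) / L ^ 3\<close> in simp)
qed

lemma relax_tree_ecount_slice_le:
  fixes l h :: nat
  assumes tree: "relax_tree V E beta c d P t" and "\<And>u v. E u v = E v u"
    and "clean_cut l t" "clean_cut h t" "h \<le> length (vlist t)"
    and "0 < beta" "beta < 1" "0 < 1 - 1 / d"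
  defines "A \<equiv> (!) (vlist t) ` {l..<h}"
  shows "real (ecount E A (P - A)) \<le> 2 * cut_const beta c d * real (card P) powr (1 - 1 / d)"
proof -
  have "distinct (vlist t)" "set (vlist t) = P" and splits: "splits_ok (split_ok E beta c d) t"
    using tree upper_ok_splits_ok unfolding relax_tree_def by blast+
  then have "length (vlist t) = card P" by (metis distinct_card)
  then have cut: "real (ecount E (set (take a (vlist t))) (set (drop a (vlist t))))
      \<le> cut_const beta c d * real (card P) powr (1 - 1 / d)" if "clean_cut a t" for a
    using ecount_take_drop_le[OF splits \<open>distinct (vlist t)\<close> that assms(6-8)] by simp
  have "ecount E A (P - A) \<le> ecount E (set (take l (vlist t))) (set (drop l (vlist t)))
      + ecount E (set (take h (vlist t))) (set (drop h (vlist t)))"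
    using ecount_slice_le[OF assms(2,5), where l = l] \<open>set (vlist t) = P\<close> unfolding A_def by simp
  then show ?thesis using cut[OF assms(3)] cut[OF assms(4)] by linarith
qed

lemma rbp_output_bounds:
  assumes "finite V" "\<And>u v. E u v = E v u" "P \<subseteq> V" "\<And>v. outgoing V E P {v} \<le> M"
    and "0 < beta" "beta < 1" "0 < 1 - 1 / d"
    and "rbp_output V E beta c d P Px"
  defines "L \<equiv> log 2 (real (gsize V E))"
  shows "real (ecount E Px (P - Px)) \<le> 2 * cut_const beta c d * real (card P) powr (1 - 1 / d)"
    and "\<bar>2 * real (card Px) - real (card P)\<bar> \<le> 6 + 4 * real (card P) / L ^ 3"
    and "\<bar>2 * real (outgoing V E P Px) - real (outgoing V E P P)\<bar>
           \<le> 2 + 4 * real M + 4 * real (outgoing V E P P) / L ^ 2"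
    and "Px \<subseteq> P"
proof -
  obtain t i j i' j' where tree: "relax_tree V E beta c d P t"
    and ij: "i \<le> j" "j \<le> wsum V E P (vlist t)"
    and blue: "\<bar>2 * real (blue_in V E P (vlist t) i j) - real (length (vlist t))\<bar> \<le> 2"
    and red: "\<bar>2 * real ((j - i) - blue_in V E P (vlist t) i j) - real (outgoing V E P P)\<bar> \<le> 2"
    and moved: "moved_end V E P (segs t) i i'" "moved_end V E P (segs t) j j'"
    and Px: "Px = {vlist t ! n | n. n < length (vlist t) \<and>
      i' \<le> bluepos V E P (vlist t) n \<and> bluepos V E P (vlist t) n < j'}"
    using assms(8) unfolding rbp_output_def Let_def by blast
  define vs where "vs = vlist t"
  define a1 where "a1 = blues_before V E P vs i'"
  define a2 where "a2 = blues_before V E P vs j'"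
  have "distinct vs" "set vs = P"
    using tree unfolding relax_tree_def vs_def by auto
  then have n: "length vs = card P" by (metis distinct_card)
  have concat_sg: "concat (map fst (segs t)) = vs" unfolding vs_def by (rule concat_map_fst_segs)
  have Px: "Px = (!) vs ` {a1..<a2}"
    unfolding Px a1_def a2_def vs_def by (rule vertices_between_eq_slice)
  have "a2 \<le> length vs" unfolding a2_def by (rule blues_before_le_length)
  then show "Px \<subseteq> P" unfolding Px using \<open>set vs = P\<close> by auto
  have R: "red_prefix V E P vs (length vs) = outgoing V E P P"
    using red_prefix_length[OF \<open>distinct vs\<close> assms(1)] \<open>set vs = P\<close> by simp
  have "0 \<le> L" unfolding L_def by (rule log2_nonneg)
  have small: "real (length xs) \<le> 1 + real (card P) / L ^ 3 \<and>
      real (outgoing V E P (set xs)) \<le> real (outgoing V E P P) / L ^ 2"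
    if "(xs, True) \<in> set (segs t)" for xs
    using relax_tree_unrefined_small[OF tree that assms(1,3,5,6)] unfolding L_def by simp
  have "0 \<le> 1 + real (card P) / L ^ 3" "0 \<le> real (outgoing V E P P) / L ^ 2"
    using \<open>0 \<le> L\<close> by simp_all
  note balance = moved_subarray_balance[OF concat_sg ij[folded vs_def] \<open>distinct vs\<close> assms(1)
      blue[folded vs_def] red[folded vs_def R] moved this small assms(4)]
  have "card Px = a2 - a1"
    unfolding Px using \<open>distinct vs\<close> \<open>a2 \<le> length vs\<close> by (rule card_nth_image_atLeastLessThan)
  then show "\<bar>2 * real (card Px) - real (card P)\<bar> \<le> 6 + 4 * real (card P) / L ^ 3"
    using balance(1) unfolding a1_def[symmetric] a2_def[symmetric] n by simp
  have "outgoing V E P Px = red_prefix V E P vs a2 - red_prefix V E P vs a1"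
    unfolding Px using \<open>distinct vs\<close> assms(1) \<open>a2 \<le> length vs\<close> by (rule outgoing_slice)
  then show "\<bar>2 * real (outgoing V E P Px) - real (outgoing V E P P)\<bar>
      \<le> 2 + 4 * real M + 4 * real (outgoing V E P P) / L ^ 2"
    using balance(2) unfolding a1_def[symmetric] a2_def[symmetric] R by simp
  have "clean_cut a1 t" "clean_cut a2 t"
    using moved_end_clean_cut[OF concat_sg moved(1)] moved_end_clean_cut[OF concat_sg moved(2)]
    unfolding a1_def a2_def by (auto intro: clean_cut_segs_imp_clean_cut)
  then show "real (ecount E Px (P - Px)) \<le> 2 * cut_const beta c d * real (card P) powr (1 - 1 / d)"
    using relax_tree_ecount_slice_le[OF tree assms(2) _ _ \<open>a2 \<le> length vs\<close>[unfolded vs_def] assms(5-7)]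
    unfolding Px vs_def by blast
qed

lemma abs_diff_le_absorb:
  fixes X Y A w :: real
  assumes "0 \<le> w" "w \<le> 1 / 8" "\<bar>X - Y\<bar> \<le> A + 4 * (X + Y) * w"
  shows "\<bar>X - Y\<bar> \<le> 2 * A + 16 * Y * w"
proof -
  have "(X + Y) * w \<le> (2 * Y + \<bar>X - Y\<bar>) * w" using assms(1) by (intro mult_right_mono) auto
  moreover have "\<bar>X - Y\<bar> * w \<le> \<bar>X - Y\<bar> * (1 / 8)" using assms(2) by (intro mult_left_mono) auto
  ultimately show ?thesis using assms(3) by (simp add: algebra_simps)
qed

lemma outgoing_le_49_of_gsize_less_8:
  assumes "finite V" "P \<subseteq> V" "gsize V E < 8"
  shows "outgoing V E P P \<le> 49"
proof -
  have "outgoing V E P P \<le> card P * card (V - P)"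
    unfolding outgoing_def using assms(1,2) by (intro ecount_le_card_mult) (auto intro: finite_subset)
  also have "\<dots> \<le> card V * card V"
    using assms(1,2) by (intro mult_le_mono card_mono) auto
  also have "\<dots> \<le> 7 * 7" using assms(3) unfolding gsize_def by (intro mult_le_mono) auto
  finally show ?thesis by simp
qed

lemma outgoing_balance_absorbed:
  fixes X Y :: real
  assumes "finite V" "P \<subseteq> V" "L = log 2 (real (gsize V E))"
    and R: "real (outgoing V E P P) = X + Y" "0 \<le> X" "0 \<le> Y"
    and balance: "\<bar>2 * X - (X + Y)\<bar> \<le> 2 + 4 * real M + 4 * (X + Y) / L ^ 2"
    and C: "8 * real M + 64 \<le> C"
  shows "\<bar>X - Y\<bar> \<le> C * Y / L ^ 2 + C"
proof (cases "8 \<le> L ^ 2")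
  case True
  have "\<bar>X - Y\<bar> \<le> 2 * (2 + 4 * real M) + 16 * Y * (1 / L ^ 2)"
    using True balance by (intro abs_diff_le_absorb) (auto simp: divide_simps)
  moreover have "16 * Y * (1 / L ^ 2) \<le> C * Y / L ^ 2"
    using C R(3) by (simp, intro divide_right_mono mult_right_mono) auto
  moreover have "2 * (2 + 4 * real M) \<le> C"
    using C unfolding distrib_left by linarith
  ultimately show ?thesis by linarith
next
  case False
  have "L < 3"
  proof (rule ccontr)
    assume "\<not> L < 3"
    then have "3 ^ 2 \<le> L ^ 2" by (intro power_mono) auto
    then show False using False by simp
  qed
  then have "gsize V E < 8"
    using le_log2_of_powr_le[of 3 "gsize V E"] assms(3) by fastforce
  then have "X + Y \<le> 49"
    using outgoing_le_49_of_gsize_less_8[OF assms(1,2), of E] R(1) by simp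
  moreover have "0 \<le> C * Y / L ^ 2" using C R(3) by simp
  ultimately show ?thesis using C R(2,3) by linarith
qed

lemma rbp_output_relax_balanced:
  assumes "finite V" "\<And>u v. E u v = E v u" "P \<subseteq> V" "\<And>v. outgoing V E P {v} \<le> M"
    and "0 < beta" "beta < 1" "0 < 1 - 1 / d"
    and "rbp_output V E beta c d P Px"
    and C: "2 * cut_const beta c d + 8 * real M + 64 \<le> C"
  defines "L \<equiv> log 2 (real (gsize V E))"
  shows "real (ecount E Px (P - Px)) \<le> C * real (gsize P E) powr (1 - 1 / d)"
    and "\<bar>real (card Px) - real (card (P - Px))\<bar> \<le> C * real (gsize P E) / L ^ 3 + C"
    and "\<bar>real (outgoing V E P Px) - real (outgoing V E P (P - Px))\<bar>
           \<le> C * real (outgoing V E P (P - Px)) / L ^ 2 + C"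
proof -
  note bounds = rbp_output_bounds[OF assms(1-8), folded L_def]
  have "finite P" using assms(1,3) finite_subset by blast
  have "0 \<le> L" unfolding L_def by (rule log2_nonneg)
  have "card P \<le> gsize P E" unfolding gsize_def by simp
  have "0 \<le> cut_const beta c d" using assms(5-7) by (rule cut_const_nonneg)
  have "real (card P) powr (1 - 1 / d) \<le> real (gsize P E) powr (1 - 1 / d)"
    using \<open>card P \<le> gsize P E\<close> assms(7) by (intro powr_mono2) auto
  then have "2 * cut_const beta c d * real (card P) powr (1 - 1 / d)
      \<le> 2 * cut_const beta c d * real (gsize P E) powr (1 - 1 / d)"
    using \<open>0 \<le> cut_const beta c d\<close> by (intro mult_left_mono) auto
  also have "\<dots> \<le> C * real (gsize P E) powr (1 - 1 / d)"
    using C by (intro mult_right_mono) auto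
  finally show "real (ecount E Px (P - Px)) \<le> C * real (gsize P E) powr (1 - 1 / d)"
    using bounds(1) by linarith
  have "real (card (P - Px)) = real (card P) - real (card Px)"
    using card_Diff_subset[OF finite_subset[OF bounds(4) \<open>finite P\<close>] bounds(4)]
      card_mono[OF \<open>finite P\<close> bounds(4)] by (simp add: of_nat_diff)
  moreover have "4 * real (card P) / L ^ 3 \<le> C * real (gsize P E) / L ^ 3"
    using \<open>card P \<le> gsize P E\<close> \<open>0 \<le> L\<close> C \<open>0 \<le> cut_const beta c d\<close>
    by (intro divide_right_mono mult_mono) auto
  ultimately show "\<bar>real (card Px) - real (card (P - Px))\<bar> \<le> C * real (gsize P E) / L ^ 3 + C"
    using bounds(2) C \<open>0 \<le> cut_const beta c d\<close> by linarith
  have "outgoing V E P P = outgoing V E P Px + outgoing V E P (P - Px)"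
    using ecount_Un_left_disjoint[of Px "P - Px" "V - P" E] \<open>finite P\<close> assms(1) bounds(4)
    unfolding outgoing_def by (metis Diff_disjoint Diff_partition finite_Diff finite_subset)
  then show "\<bar>real (outgoing V E P Px) - real (outgoing V E P (P - Px))\<bar>
      \<le> C * real (outgoing V E P (P - Px)) / L ^ 2 + C"
    using bounds(3) C \<open>0 \<le> cut_const beta c d\<close>
    by (intro outgoing_balance_absorbed[OF assms(1,3) meta_eq_to_obj_eq[OF L_def]])
      (simp_all add: add_divide_distrib, linarith)
qed

lemma mesh_rbp_output_relax_balanced:
  fixes S :: "(real ^ 'd) set set"
  assumes mesh: "well_shaped_mesh rho S" and "P \<subseteq> mesh_vertices S"
    and "0 < beta" "beta < 1" "2 \<le> CARD('d)"
    and "rbp_output (mesh_vertices S) (mesh_edge S) beta c (real CARD('d)) P Px"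
  defines "C \<equiv> 2 * cut_const beta c (real CARD('d))
              + 8 * real (nat \<lceil>(1 + 2 * \<bar>rho\<bar>) ^ CARD('d)\<rceil> * (CARD('d) + 1)) + 64"
  shows "real (ecount (mesh_edge S) Px (P - Px))
           \<le> C * real (gsize P (mesh_edge S)) powr (1 - 1 / real CARD('d))"
    and "\<bar>real (card Px) - real (card (P - Px))\<bar>
           \<le> C * real (gsize P (mesh_edge S)) / log 2 (real (gsize (mesh_vertices S) (mesh_edge S))) ^ 3 + C"
    and "\<bar>real (outgoing (mesh_vertices S) (mesh_edge S) P Px)
           - real (outgoing (mesh_vertices S) (mesh_edge S) P (P - Px))\<bar>
         \<le> C * real (outgoing (mesh_vertices S) (mesh_edge S) P (P - Px))
             / log 2 (real (gsize (mesh_vertices S) (mesh_edge S))) ^ 2 + C"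
  using assms(5)
  by (auto intro!: rbp_output_relax_balanced[OF mesh_vertices_finite[OF mesh] mesh_edge_commute
      assms(2) outgoing_singleton_le_mesh_degree[OF mesh] assms(3,4) _ assms(6)] simp: C_def)

theorem lemma6:
  fixes rho eps c :: real
  assumes "CARD('d::finite) \<ge> 2" and "0 < eps" and "eps < 1"
  shows "\<exists>C::real. \<forall>(S :: (real ^ 'd) set set) P Px.
     well_shaped_mesh rho S \<and> P \<subseteq> mesh_vertices S \<and>
     rbp_output (mesh_vertices S) (mesh_edge S)
       ((real CARD('d) + 1 + eps) / (real CARD('d) + 2)) c (real CARD('d)) P Px
     \<longrightarrow>
       (let V = mesh_vertices S; E = mesh_edge S; Py = P - Px;
            L = log 2 (real (gsize V E)) in
        real (ecount E Px Py) \<le> C * real (gsize P E) powr (1 - 1 / real CARD('d)) \<and>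
        \<bar>real (card Px) - real (card Py)\<bar> \<le> C * real (gsize P E) / L ^ 3 + C \<and>
        \<bar>real (outgoing V E P Px) - real (outgoing V E P Py)\<bar>
          \<le> C * real (outgoing V E P Py) / L ^ 2 + C)"
proof -
  define beta where "beta = (real CARD('d) + 1 + eps) / (real CARD('d) + 2)"
  have "0 < beta" "beta < 1" using assms unfolding beta_def by (simp_all add: field_simps)
  then show ?thesis
    unfolding beta_def[symmetric] Let_def
    by (intro exI[of _ "2 * cut_const beta c (real CARD('d))
        + 8 * real (nat \<lceil>(1 + 2 * \<bar>rho\<bar>) ^ CARD('d)\<rceil> * (CARD('d) + 1)) + 64"] allI impI,
        elim conjE, intro conjI)
      (rule mesh_rbp_output_relax_balanced, (assumption | rule assms(1))+)+
qed

end
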